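(* Let $(X,f)$ be a dynamical system and $\mathbf{a}=(a_1,\dots,a_r)\in\mathbb{N}^r$. The following are equivalent: (1) $(X,f)$ is $\mathbf{a}$-transitive; (2) $(X,f)$ is $\nabla(\mathcal{F}[\mathbf{a}])$-point transitive; (3) $Trans(X,f)=Trans_{\nabla(\mathcal{F}[\mathbf{a}])}(X,f)\neq\emptyset$.
   Context: A dynamical system is a pair $(X,f)$ with $X$ a compact metric space and $f:X\to X$ continuous. $\mathbb{N}=\{1,2,\dots\}$, $\mathbb{Z}_+=\{0,1,2,\dots\}$. $N(U,V)=\{n\in\mathbb{N}: U\cap f^{-n}(V)\neq\emptyset\}$, $N(x,U)=\{n\in\mathbb{N}: f^n(x)\in U\}$. $(X,f)$ is transitive if $N(U,V)\neq\emptyset$ for all non-empty open $U,V$. A transitive point is an $x$ with $\omega(x,f)=X$; $Trans(X,f)$ is the set of transitive points. For a family $\mathcal{F}$ of subsets of $\mathbb{N}$, $x$ is an $\mathcal{F}$-transitive point if $N(x,U)\in\mathcal{F}$ for every non-empty open $U$; $Trans_{\mathcal{F}}(X,f)$ is the set of these, and $(X,f)$ is $\mathcal{F}$-point transitive if it is non-empty. For $F\subset\mathbb{N}$, $F-F=\{a-b:a,b\in F,\ a>b\}$ and $\nabla(\mathcal{F})=\{F\subset\mathbb{N}: F-F\in\mathcal{F}\}$. For $\mathbf{a}\in\mathbb{N}^r$, $(X,f)$ is $\mathbf{a}$-transitive if $(X^r,f^{a_1}\times\dots\times f^{a_r})$ is transitive. $\mathcal{F}[\mathbf{a}]$ is the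 collection of all $F\subset\mathbb{N}$ such that for every $(n_1,\dots,n_r)\in\mathbb{Z}_+^r$ there exists $k\in\mathbb{N}$ with $ka_i+n_i\in F$ for all $i=1,\dots,r$. *)

theory Defs
  imports "HOL-Analysis.Analysis"
begin

definition top_transitive :: "'b topology \<Rightarrow> ('b \<Rightarrow> 'b) \<Rightarrow> bool" where
  "top_transitive T g \<longleftrightarrow>
     (\<forall>U V. openin T U \<and> U \<noteq> {} \<and> openin T V \<and> V \<noteq> {} \<longrightarrow>
        (\<exists>n\<ge>1. \<exists>x\<in>U. (g ^^ n) x \<in> V))"

definition hit_times :: "('a \<Rightarrow> 'a) \<Rightarrow> 'a \<Rightarrow> 'a set \<Rightarrow> nat set" where
  "hit_times f x U = {n. n \<ge> 1 \<and> (f ^^ n) x \<in> U}"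

definition omega_limit :: "('a::topological_space \<Rightarrow> 'a) \<Rightarrow> 'a \<Rightarrow> 'a set" where
  "omega_limit f x = (\<Inter>N. closure ((\<lambda>n. (f ^^ n) x) ` {N..}))"

definition trans_points :: "'a::topological_space set \<Rightarrow> ('a \<Rightarrow> 'a) \<Rightarrow> 'a set" where
  "trans_points X f = {x \<in> X. omega_limit f x = X}"

definition F_trans_points :: "nat set set \<Rightarrow> 'a::topological_space set \<Rightarrow> ('a \<Rightarrow> 'a) \<Rightarrow> 'a set" where
  "F_trans_points Fam X f =
     {x \<in> X. \<forall>U. openin (top_of_set X) U \<and> U \<noteq> {} \<longrightarrow> hit_times f x U \<in> Fam}"

definition diff_set :: "nat set \<Rightarrow> nat set" where
  "diff_set F = {a - b | a b. a \<in> F \<and> b \<in> F \<and> a > b}"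

definition nabla :: "nat set set \<Rightarrow> nat set set" where
  "nabla Fam = {F. F \<subseteq> {1..} \<and> diff_set F \<in> Fam}"

text \<open>F[a] for a = (a 0, ..., a (r-1))\<close>
definition F_vec :: "nat \<Rightarrow> (nat \<Rightarrow> nat) \<Rightarrow> nat set set" where
  "F_vec r a = {F. F \<subseteq> {1..} \<and>
     (\<forall>n::nat \<Rightarrow> nat. \<exists>k\<ge>1. \<forall>i<r. k * a i + n i \<in> F)}"

definition a_transitive :: "'a::topological_space set \<Rightarrow> ('a \<Rightarrow> 'a) \<Rightarrow> nat \<Rightarrow> (nat \<Rightarrow> nat) \<Rightarrow> bool" where
  "a_transitive X f r a \<longleftrightarrow>
     top_transitive (product_topology (\<lambda>_. top_of_set X) {..<r})
       (\<lambda>x. restrict (\<lambda>i. (f ^^ a i) (x i)) {..<r})"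

end

theory Submission
  imports Defs
begin

text \<open>The transitive points are those whose orbit enters every non-empty open set infinitely
  often, and for such a point x the difference set N(x,U) - N(x,U) is exactly the set of return
  times N(U,U). Since members of F[a] are infinite and difference sets of finite sets are finite,
  Trans_{\<nabla>F[a]} is therefore the set of transitive points if N(U,U) \<in> F[a] for every
  non-empty open U, and empty otherwise. It remains to see that a-transitivity is equivalent to
  this condition on N(U,U) together with the existence of a transitive point. An a-transitive
  system is transitive, hence has a transitive point by Baire's theorem, and it satisfies the
  condition after pulling the open sets back along f^{n_i} (f is onto). Conversely, given boxes
  U_1 \<times> ... \<times> U_r and V_1 \<times> ... \<times> V_r, let the transitive point visit V_i at time t_i
  and then U_i at time s_i \<ge> t_i; the return times of the open set of points that follow
  the same itinerary contain some k a_i + (s_i - t_i) for all i at once, and this k works.\<close>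

lemma funpow_mem: "x \<in> X \<Longrightarrow> f ` X \<subseteq> X \<Longrightarrow> (f ^^ n) x \<in> X"
  by (induction n) auto

lemma continuous_on_funpow:
  assumes "continuous_on X f" "f ` X \<subseteq> X"
  shows "continuous_on X (f ^^ n)"
proof (induction n)
  case 0
  then show ?case by (simp add: continuous_on_id)
next
  case (Suc n)
  have "continuous_on ((f ^^ n) ` X) f"
    using continuous_on_subset[OF assms(1)] funpow_mem[OF _ assms(2)] by blast
  then show ?case
    using continuous_on_compose[OF Suc] by (simp add: comp_def)
qed

lemma openin_funpow_preimage:
  assumes "continuous_on X f" "f ` X \<subseteq> X" "openin (top_of_set X) V"
  shows "openin (top_of_set X) {y \<in> X. (f ^^ n) y \<in> V}"
proof -
  obtain T where T: "open T" "V = X \<inter> T"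
    using assms(3) by (auto simp: openin_open)
  have "{y \<in> X. (f ^^ n) y \<in> V} = X \<inter> (f ^^ n) -` T"
    using funpow_mem[OF _ assms(2)] T(2) by auto
  then show ?thesis
    using continuous_openin_preimage_gen[OF continuous_on_funpow[OF assms(1,2)] T(1)] by simp
qed

definition visits_open_sets_infinitely :: "'a::topological_space set \<Rightarrow> ('a \<Rightarrow> 'a) \<Rightarrow> 'a \<Rightarrow> bool"
  where "visits_open_sets_infinitely X f x \<longleftrightarrow>
    (\<forall>U. openin (top_of_set X) U \<and> U \<noteq> {} \<longrightarrow> infinite (hit_times f x U))"

definition return_times :: "('a \<Rightarrow> 'a) \<Rightarrow> 'a set \<Rightarrow> nat set"
  where "return_times f U = {n. n \<ge> 1 \<and> (\<exists>y\<in>U. (f ^^ n) y \<in> U)}"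

lemma visits_open_sets_infinitelyD:
  "visits_open_sets_infinitely X f x \<Longrightarrow> openin (top_of_set X) U \<Longrightarrow> U \<noteq> {}
    \<Longrightarrow> \<exists>n\<ge>M. n \<in> hit_times f x U"
  unfolding visits_open_sets_infinitely_def infinite_nat_iff_unbounded_le by blast

lemma trans_points_eq_visits_open_sets_infinitely:
  fixes X :: "'a::metric_space set"
  assumes "closed X" "f ` X \<subseteq> X"
  shows "trans_points X f = {x \<in> X. visits_open_sets_infinitely X f x}"
proof -
  have "omega_limit f x = X \<longleftrightarrow> visits_open_sets_infinitely X f x" if x: "x \<in> X" for x
  proof
    assume om: "omega_limit f x = X"
    show "visits_open_sets_infinitely X f x"
      unfolding visits_open_sets_infinitely_def infinite_nat_iff_unbounded_le
    proof (intro allI impI)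
      fix U M assume U: "openin (top_of_set X) U \<and> U \<noteq> {}"
      then obtain y e where y: "y \<in> U" "e > 0" "ball y e \<inter> X \<subseteq> U"
        by (metis ex_in_conv openin_contains_ball)
      have "y \<in> closure ((\<lambda>n. (f ^^ n) x) ` {Suc M..})"
        using om y(1) U openin_imp_subset unfolding omega_limit_def by blast
      then obtain n where "n \<ge> Suc M" "dist ((f ^^ n) x) y < e"
        using y(2) unfolding closure_approachable by auto
      then show "\<exists>n\<ge>M. n \<in> hit_times f x U"
        using y(3) funpow_mem[OF x assms(2)] unfolding hit_times_def
        by (intro exI[of _ n]) (auto simp: dist_commute)
    qed
  next
    assume vis: "visits_open_sets_infinitely X f x"
    have "closure ((\<lambda>n. (f ^^ n) x) ` {N..}) \<subseteq> X" for N
      using funpow_mem[OF x assms(2)] by (intro closure_minimal[OF _ assms(1)]) auto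
    moreover have "y \<in> closure ((\<lambda>n. (f ^^ n) x) ` {N..})" if y: "y \<in> X" for y N
      unfolding closure_approachable
    proof (intro allI impI)
      fix e :: real assume "e > 0"
      then have "openin (top_of_set X) (X \<inter> ball y e)" "X \<inter> ball y e \<noteq> {}"
        using y by (auto simp: openin_open_Int)
      then obtain n where "n \<ge> N" "n \<in> hit_times f x (X \<inter> ball y e)"
        using visits_open_sets_infinitelyD[OF vis] by blast
      then show "\<exists>z\<in>(\<lambda>n. (f ^^ n) x) ` {N..}. dist z y < e"
        unfolding hit_times_def by (auto simp: dist_commute)
    qed
    ultimately show "omega_limit f x = X"
      unfolding omega_limit_def by blast
  qed
  then show ?thesis
    unfolding trans_points_def by blast
qed

lemma diff_set_hit_times:
  assumes "continuous_on X f" "f ` X \<subseteq> X" "visits_open_sets_infinitely X f x"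
    and "openin (top_of_set X) U"
  shows "diff_set (hit_times f x U) = return_times f U"
proof
  show "diff_set (hit_times f x U) \<subseteq> return_times f U"
  proof
    fix n assume "n \<in> diff_set (hit_times f x U)"
    then obtain p q where pq: "n = p - q" "p \<in> hit_times f x U" "q \<in> hit_times f x U" "q < p"
      unfolding diff_set_def by blast
    then have "p = n + q"
      by simp
    then have "(f ^^ n) ((f ^^ q) x) = (f ^^ p) x"
      by (simp add: funpow_add)
    moreover have "(f ^^ q) x \<in> U" "(f ^^ p) x \<in> U"
      using pq(2,3) unfolding hit_times_def by auto
    moreover have "n \<ge> 1"
      using pq(1,4) by simp
    ultimately show "n \<in> return_times f U"
      unfolding return_times_def by (intro CollectI conjI bexI[of _ "(f ^^ q) x"]) simp_all
  qed
next
  show "return_times f U \<subseteq> diff_set (hit_times f x U)"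
  proof
    fix n assume "n \<in> return_times f U"
    then obtain y where y: "n \<ge> 1" "y \<in> U" "(f ^^ n) y \<in> U"
      unfolding return_times_def by blast
    let ?W = "U \<inter> {y \<in> X. (f ^^ n) y \<in> U}"
    have "openin (top_of_set X) ?W"
      using openin_funpow_preimage[OF assms(1,2,4)] assms(4) by blast
    moreover have "?W \<noteq> {}"
      using y openin_imp_subset[OF assms(4)] by blast
    ultimately obtain q where "q \<in> hit_times f x ?W"
      using visits_open_sets_infinitelyD[OF assms(3)] by blast
    then have "n + q \<in> hit_times f x U" "q \<in> hit_times f x U"
      unfolding hit_times_def by (auto simp: funpow_add)
    then show "n \<in> diff_set (hit_times f x U)"
      unfolding diff_set_def using y(1) by (intro CollectI exI[of _ "n + q"] exI[of _ q]) auto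
  qed
qed

lemma finite_diff_set:
  assumes "finite H"
  shows "finite (diff_set H)"
proof (rule finite_subset)
  show "diff_set H \<subseteq> (\<lambda>(p, q). p - q) ` (H \<times> H)"
    unfolding diff_set_def by auto
qed (use assms in simp)

lemma F_vecD: "D \<in> F_vec r a \<Longrightarrow> \<exists>k\<ge>1. \<forall>i<r. k * a i + n i \<in> D"
  unfolding F_vec_def by blast

lemma infinite_F_vec:
  assumes "r \<ge> 1" "D \<in> F_vec r a"
  shows "infinite D"
  unfolding infinite_nat_iff_unbounded_le
proof
  fix M
  obtain k where "\<forall>i<r. k * a i + M \<in> D"
    using F_vecD[OF assms(2), where n = "\<lambda>_. M"] by blast
  then show "\<exists>n\<ge>M. n \<in> D"
    using assms(1) by (intro exI[of _ "k * a 0 + M"]) auto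
qed

lemma F_trans_points_nabla_F_vec:
  assumes "continuous_on X f" "f ` X \<subseteq> X" "r \<ge> 1"
  shows "F_trans_points (nabla (F_vec r a)) X f =
    {x \<in> X. visits_open_sets_infinitely X f x \<and>
       (\<forall>U. openin (top_of_set X) U \<and> U \<noteq> {} \<longrightarrow> return_times f U \<in> F_vec r a)}"
proof -
  have hits: "hit_times f x U \<subseteq> {1..}" for x U
    unfolding hit_times_def by auto
  have diffs: "x \<in> F_trans_points (nabla (F_vec r a)) X f \<longleftrightarrow>
      x \<in> X \<and> (\<forall>U. openin (top_of_set X) U \<and> U \<noteq> {} \<longrightarrow> diff_set (hit_times f x U) \<in> F_vec r a)"
    for x
    unfolding F_trans_points_def nabla_def by (simp add: hits[simplified])
  have vis: "visits_open_sets_infinitely X f x" if "x \<in> F_trans_points (nabla (F_vec r a)) X f" for x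
    unfolding visits_open_sets_infinitely_def
  proof (intro allI impI)
    fix U assume "openin (top_of_set X) U \<and> U \<noteq> {}"
    then have "diff_set (hit_times f x U) \<in> F_vec r a"
      using that unfolding diffs by blast
    then show "infinite (hit_times f x U)"
      using infinite_F_vec[OF assms(3)] finite_diff_set by blast
  qed
  have returns: "(\<forall>U. openin (top_of_set X) U \<and> U \<noteq> {} \<longrightarrow> diff_set (hit_times f x U) \<in> F_vec r a)
      \<longleftrightarrow> (\<forall>U. openin (top_of_set X) U \<and> U \<noteq> {} \<longrightarrow> return_times f U \<in> F_vec r a)"
    if "visits_open_sets_infinitely X f x" for x
    using diff_set_hit_times[OF assms(1,2) that] by simp
  show ?thesis
  proof (intro set_eqI iffI)
    fix x assume x: "x \<in> F_trans_points (nabla (F_vec r a)) X f"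
    show "x \<in> {x \<in> X. visits_open_sets_infinitely X f x \<and>
       (\<forall>U. openin (top_of_set X) U \<and> U \<noteq> {} \<longrightarrow> return_times f U \<in> F_vec r a)}"
      using x vis[OF x] returns[OF vis[OF x]] unfolding diffs by simp
  next
    fix x assume "x \<in> {x \<in> X. visits_open_sets_infinitely X f x \<and>
       (\<forall>U. openin (top_of_set X) U \<and> U \<noteq> {} \<longrightarrow> return_times f U \<in> F_vec r a)}"
    then show "x \<in> F_trans_points (nabla (F_vec r a)) X f"
      using returns unfolding diffs by simp
  qed
qed

lemma top_transitiveD:
  "top_transitive T g \<Longrightarrow> openin T U \<Longrightarrow> U \<noteq> {} \<Longrightarrow> openin T V \<Longrightarrow> V \<noteq> {}
    \<Longrightarrow> \<exists>n\<ge>1. \<exists>x\<in>U. (g ^^ n) x \<in> V"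
  unfolding top_transitive_def by blast

lemma top_transitive_unbounded:
  assumes "continuous_on X f" "f ` X \<subseteq> X" "top_transitive (top_of_set X) f"
    and "openin (top_of_set X) U" "U \<noteq> {}" "openin (top_of_set X) V" "V \<noteq> {}"
  shows "\<exists>n\<ge>N. \<exists>x\<in>U. (f ^^ n) x \<in> V"
  using assms(6,7)
proof (induction N arbitrary: V)
  case 0
  then show ?case
    using assms(3-5) unfolding top_transitive_def by (meson le0)
next
  case (Suc N)
  have "openin (top_of_set X) X" "X \<noteq> {}"
    using assms(4,5) openin_imp_subset by auto
  then obtain m y where my: "m \<ge> 1" "y \<in> X" "(f ^^ m) y \<in> V"
    using assms(3) Suc.prems unfolding top_transitive_def by blast
  have "openin (top_of_set X) {z \<in> X. (f ^^ m) z \<in> V}" "{z \<in> X. (f ^^ m) z \<in> V} \<noteq> {}"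
    using openin_funpow_preimage[OF assms(1,2) Suc.prems(1)] my by auto
  then obtain n x where "n \<ge> N" "x \<in> U" "(f ^^ n) x \<in> {z \<in> X. (f ^^ m) z \<in> V}"
    using Suc.IH by blast
  then show ?case
    using my(1) by (intro exI[of _ "m + n"]) (auto simp: funpow_add)
qed

lemma top_transitive_funpow_surj:
  fixes X :: "'a::metric_space set"
  assumes "compact X" "continuous_on X f" "f ` X \<subseteq> X" "top_transitive (top_of_set X) f"
  shows "(f ^^ k) ` X = X"
proof -
  have "f ` X = X"
  proof (rule ccontr)
    assume "f ` X \<noteq> X"
    then have ne: "X - f ` X \<noteq> {}"
      using assms(3) by blast
    have "closed (f ` X)"
      using compact_continuous_image[OF assms(2,1)] compact_imp_closed by blast
    then have "openin (top_of_set X) (X - f ` X)"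
      by (simp add: Diff_eq openin_open_Int open_Compl)
    then obtain n x where "n \<ge> 1" "x \<in> X" "(f ^^ n) x \<in> X - f ` X"
      using assms(4) ne unfolding top_transitive_def by blast
    moreover obtain m where "n = Suc m"
      using \<open>n \<ge> 1\<close> by (cases n) auto
    ultimately show False
      using funpow_mem[OF \<open>x \<in> X\<close> assms(3), of m] by auto
  qed
  then show ?thesis
    by (induction k) (simp, metis funpow.simps(2) image_comp)
qed

lemma compact_countable_open_base:
  fixes X :: "'a::metric_space set"
  assumes "compact X"
  obtains \<B> where "countable \<B>" "\<And>B. B \<in> \<B> \<Longrightarrow> openin (top_of_set X) B \<and> B \<noteq> {}"
    "\<And>U. openin (top_of_set X) U \<Longrightarrow> U \<noteq> {} \<Longrightarrow> \<exists>B\<in>\<B>. B \<subseteq> U"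
proof -
  have "\<forall>m. \<exists>C. C \<subseteq> X \<and> finite C \<and> X \<subseteq> (\<Union>c\<in>C. ball c (inverse (Suc m)))"
  proof
    fix m
    have cover: "X \<subseteq> (\<Union>c\<in>X. ball c (inverse (Suc m)))"
      by force
    obtain C where "C \<subseteq> X" "finite C" "X \<subseteq> (\<Union>c\<in>C. ball c (inverse (Suc m)))"
      by (rule compactE_image[OF assms _ cover]) auto
    then show "\<exists>C. C \<subseteq> X \<and> finite C \<and> X \<subseteq> (\<Union>c\<in>C. ball c (inverse (Suc m)))"
      by blast
  qed
  then obtain C where C: "\<And>m. C m \<subseteq> X" "\<And>m. finite (C m)"
    "\<And>m. X \<subseteq> (\<Union>c\<in>C m. ball c (inverse (Suc m)))"
    by (auto dest!: choice)
  define \<B> where "\<B> = (\<Union>m. (\<lambda>c. X \<inter> ball c (inverse (Suc m))) ` C m)"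
  show thesis
  proof
    show "countable \<B>"
      unfolding \<B>_def by (intro countable_UN countable_image countable_finite[OF C(2)] countableI_type)
    show "openin (top_of_set X) B \<and> B \<noteq> {}" if "B \<in> \<B>" for B
      using that C(1) unfolding \<B>_def by (force simp: openin_open_Int)
    show "\<exists>B\<in>\<B>. B \<subseteq> U" if U: "openin (top_of_set X) U" "U \<noteq> {}" for U
    proof -
      obtain y e where y: "y \<in> U" "e > 0" "ball y e \<inter> X \<subseteq> U"
        using U by (metis ex_in_conv openin_contains_ball)
      obtain m where m: "inverse (Suc m) < e / 2"
        using reals_Archimedean[of "e / 2"] y(2) by auto
      obtain c where c: "c \<in> C m" "y \<in> ball c (inverse (Suc m))"
        using C(3)[of m] y(1) openin_imp_subset[OF U(1)] by blast
      have "ball c (inverse (Suc m)) \<subseteq> ball y e"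
      proof
        fix z assume "z \<in> ball c (inverse (Suc m))"
        then have "dist y c < inverse (Suc m)" "dist c z < inverse (Suc m)"
          using c(2) by (simp_all add: dist_commute)
        then show "z \<in> ball y e"
          using m dist_triangle[of y z c] by simp
      qed
      then have "X \<inter> ball c (inverse (Suc m)) \<subseteq> U"
        using y(3) by blast
      moreover have "X \<inter> ball c (inverse (Suc m)) \<in> \<B>"
        unfolding \<B>_def using c(1) by blast
      ultimately show ?thesis
        by blast
    qed
  qed
qed

lemma top_transitive_imp_visiting_point:
  fixes X :: "'a::metric_space set"
  assumes "compact X" "X \<noteq> {}" "continuous_on X f" "f ` X \<subseteq> X"
    and "top_transitive (top_of_set X) f"
  obtains x where "x \<in> X" "visits_open_sets_infinitely X f x"
proof -
  obtain \<B> where \<B>: "countable \<B>" "\<And>B. B \<in> \<B> \<Longrightarrow> openin (top_of_set X) B \<and> B \<noteq> {}"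
    "\<And>U. openin (top_of_set X) U \<Longrightarrow> U \<noteq> {} \<Longrightarrow> \<exists>B\<in>\<B>. B \<subseteq> U"
    using compact_countable_open_base[OF assms(1)] by blast
  define G where "G B N = {z \<in> X. \<exists>n\<ge>N. (f ^^ n) z \<in> B}" for B N
  have G_open: "openin (top_of_set X) (G B N)" if "B \<in> \<B>" for B N
  proof -
    have "G B N = (\<Union>n\<in>{N..}. {z \<in> X. (f ^^ n) z \<in> B})"
      unfolding G_def by auto
    then show ?thesis
      using openin_funpow_preimage[OF assms(3,4)] \<B>(2)[OF that] by auto
  qed
  have G_dense: "top_of_set X closure_of G B N = topspace (top_of_set X)" if B: "B \<in> \<B>" for B N
    unfolding dense_intersects_open
  proof (intro allI impI)
    fix T assume T: "openin (top_of_set X) T \<and> T \<noteq> {}"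
    then obtain n z where "n \<ge> N" "z \<in> T" "(f ^^ n) z \<in> B"
      using top_transitive_unbounded[OF assms(3-5)] \<B>(2)[OF B] by blast
    then show "G B N \<inter> T \<noteq> {}"
      using T openin_imp_subset unfolding G_def by blast
  qed
  have "top_of_set X closure_of \<Inter>((\<lambda>(B, N). G B N) ` (\<B> \<times> UNIV)) = topspace (top_of_set X)"
  proof (rule Baire_category)
    have "compact_space (top_of_set X)" "Hausdorff_space (top_of_set X)"
      using assms(1) by (simp_all add: compact_space_subtopology Hausdorff_space_subtopology)
    then show "completely_metrizable_space (top_of_set X) \<or>
        locally_compact_space (top_of_set X) \<and> regular_space (top_of_set X)"
      using compact_imp_locally_compact_space compact_Hausdorff_imp_regular_space by blast
    show "countable ((\<lambda>(B, N). G B N) ` (\<B> \<times> UNIV))"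
      using \<B>(1) by (intro countable_image countable_SIGMA countableI_type) auto
  qed (use G_open G_dense in auto)
  then have "X \<inter> \<Inter>((\<lambda>(B, N). G B N) ` (\<B> \<times> UNIV)) \<noteq> {}"
    using assms(2) closure_of_eq_empty_gen[of "top_of_set X" "\<Inter>((\<lambda>(B, N). G B N) ` (\<B> \<times> UNIV))"]
    by (simp add: disjnt_def)
  then obtain x where x: "x \<in> X" "\<And>B N. B \<in> \<B> \<Longrightarrow> x \<in> G B N"
    by blast
  have "visits_open_sets_infinitely X f x"
    unfolding visits_open_sets_infinitely_def infinite_nat_iff_unbounded_le
  proof (intro allI impI)
    fix U M assume "openin (top_of_set X) U \<and> U \<noteq> {}"
    then obtain B where "B \<in> \<B>" "B \<subseteq> U"
      using \<B>(3) by blast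
    then obtain n where "n \<ge> Suc M" "(f ^^ n) x \<in> U"
      using x(2)[of B "Suc M"] unfolding G_def by blast
    then show "\<exists>n\<ge>M. n \<in> hit_times f x U"
      unfolding hit_times_def by (intro exI[of _ n]) auto
  qed
  then show thesis
    using that x(1) by blast
qed

lemma funpow_product_map:
  fixes f :: "'a \<Rightarrow> 'a" and a :: "nat \<Rightarrow> nat" and n :: nat
  assumes "y \<in> extensional {..<r}"
  shows "((\<lambda>x. restrict (\<lambda>i. (f ^^ a i) (x i)) {..<r}) ^^ n) y
       = restrict (\<lambda>i. (f ^^ (a i * n)) (y i)) {..<r}"
proof (induction n)
  case 0
  then show ?case
    using assms by (auto simp: extensional_def fun_eq_iff)
next
  case (Suc n)
  have "f ^^ (a i * Suc n) = (f ^^ a i) \<circ> (f ^^ (a i * n))" for i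
    by (simp add: funpow_add[symmetric])
  then show ?case
    using Suc by (auto simp: restrict_def)
qed

lemma openin_PiE_product_topology:
  assumes "\<And>i. i \<in> I \<Longrightarrow> openin T (B i)" "finite I"
  shows "openin (product_topology (\<lambda>_. T) I) (PiE I B)"
proof -
  have "finite {i \<in> I. B i \<noteq> topspace T}"
    using assms(2) by simp
  then show ?thesis
    unfolding openin_PiE_gen using assms(1) by blast
qed

lemma openin_product_topology_contains_box:
  assumes "openin (product_topology (\<lambda>_. T) I) S" "S \<noteq> {}"
  obtains B where "\<forall>i\<in>I. openin T (B i)" "PiE I B \<noteq> {}" "PiE I B \<subseteq> S"
proof -
  obtain x where "x \<in> S"
    using assms(2) by blast
  then obtain B where "\<forall>i\<in>I. openin T (B i)" "x \<in> PiE I B" "PiE I B \<subseteq> S"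
    using assms(1) unfolding openin_product_topology_alt by blast
  then show thesis
    using that by blast
qed

lemma a_transitiveD:
  assumes trans: "a_transitive X f r a"
    and boxes: "\<And>i. i < r \<Longrightarrow> openin (top_of_set X) (U i) \<and> U i \<noteq> {}"
      "\<And>i. i < r \<Longrightarrow> openin (top_of_set X) (V i) \<and> V i \<noteq> {}"
  obtains k where "k \<ge> 1" "\<forall>i<r. \<exists>w\<in>U i. (f ^^ (k * a i)) w \<in> V i"
proof -
  have opens: "openin (product_topology (\<lambda>_. top_of_set X) {..<r}) (PiE {..<r} U)"
    "openin (product_topology (\<lambda>_. top_of_set X) {..<r}) (PiE {..<r} V)"
    using boxes by (auto intro!: openin_PiE_product_topology)
  have nonempty: "PiE {..<r} U \<noteq> {}" "PiE {..<r} V \<noteq> {}"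
    using boxes by (simp_all add: PiE_eq_empty_iff)
  obtain k y where k: "k \<ge> 1" "y \<in> PiE {..<r} U"
    "((\<lambda>x. restrict (\<lambda>i. (f ^^ a i) (x i)) {..<r}) ^^ k) y \<in> PiE {..<r} V"
    using top_transitiveD[OF trans[unfolded a_transitive_def] opens(1) nonempty(1) opens(2) nonempty(2)]
    by blast
  have "((\<lambda>x. restrict (\<lambda>i. (f ^^ a i) (x i)) {..<r}) ^^ k) y
      = restrict (\<lambda>i. (f ^^ (a i * k)) (y i)) {..<r}"
    using k(2) by (intro funpow_product_map) (simp add: PiE_iff)
  then have "\<forall>i<r. y i \<in> U i \<and> (f ^^ (k * a i)) (y i) \<in> V i"
    using k(2,3) by (simp add: PiE_iff mult.commute)
  then show thesis
    using that k(1) by blast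
qed

lemma a_transitiveI:
  assumes boxes: "\<And>U V. (\<And>i. i < r \<Longrightarrow> openin (top_of_set X) (U i) \<and> U i \<noteq> {})
      \<Longrightarrow> (\<And>i. i < r \<Longrightarrow> openin (top_of_set X) (V i) \<and> V i \<noteq> {})
      \<Longrightarrow> \<exists>k\<ge>1. \<forall>i<r. \<exists>w\<in>U i. (f ^^ (k * a i)) w \<in> V i"
  shows "a_transitive X f r a"
  unfolding a_transitive_def top_transitive_def
proof (intro allI impI)
  fix U' V' assume H: "openin (product_topology (\<lambda>_. top_of_set X) {..<r}) U' \<and> U' \<noteq> {} \<and>
    openin (product_topology (\<lambda>_. top_of_set X) {..<r}) V' \<and> V' \<noteq> {}"
  obtain U where U: "\<forall>i\<in>{..<r}. openin (top_of_set X) (U i)" "PiE {..<r} U \<noteq> {}" "PiE {..<r} U \<subseteq> U'"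
    using H openin_product_topology_contains_box by metis
  obtain V where V: "\<forall>i\<in>{..<r}. openin (top_of_set X) (V i)" "PiE {..<r} V \<noteq> {}" "PiE {..<r} V \<subseteq> V'"
    using H openin_product_topology_contains_box by metis
  have "\<exists>k\<ge>1. \<forall>i<r. \<exists>w\<in>U i. (f ^^ (k * a i)) w \<in> V i"
    using U(1,2) V(1,2) by (intro boxes) (auto simp: PiE_eq_empty_iff)
  then obtain k where k: "k \<ge> 1" "\<forall>i<r. \<exists>w\<in>U i. (f ^^ (k * a i)) w \<in> V i"
    by blast
  then have "\<forall>i. \<exists>w. i < r \<longrightarrow> w \<in> U i \<and> (f ^^ (k * a i)) w \<in> V i"
    by blast
  then obtain w where w: "\<And>i. i < r \<Longrightarrow> w i \<in> U i \<and> (f ^^ (k * a i)) (w i) \<in> V i"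
    by (metis choice)
  have "((\<lambda>x. restrict (\<lambda>i. (f ^^ a i) (x i)) {..<r}) ^^ k) (restrict w {..<r})
      = restrict (\<lambda>i. (f ^^ (a i * k)) (restrict w {..<r} i)) {..<r}"
    by (intro funpow_product_map) simp
  also have "\<dots> = restrict (\<lambda>i. (f ^^ (a i * k)) (w i)) {..<r}"
    by (intro restrict_ext) simp
  also have "\<dots> \<in> PiE {..<r} V"
    using w by (simp add: restrict_PiE_iff mult.commute)
  finally have "((\<lambda>x. restrict (\<lambda>i. (f ^^ a i) (x i)) {..<r}) ^^ k) (restrict w {..<r}) \<in> V'"
    using V(3) by blast
  moreover have "restrict w {..<r} \<in> U'"
    using w U(3) restrict_PiE_iff[of w "{..<r}" U] by blast
  ultimately show "\<exists>n\<ge>1. \<exists>x\<in>U'. ((\<lambda>x. restrict (\<lambda>i. (f ^^ a i) (x i)) {..<r}) ^^ n) x \<in> V'"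
    using k(1) by blast
qed

lemma a_transitive_imp_top_transitive:
  assumes "a_transitive X f r a" "r \<ge> 1" "a 0 \<ge> 1"
  shows "top_transitive (top_of_set X) f"
  unfolding top_transitive_def
proof (intro allI impI)
  fix U V assume "openin (top_of_set X) U \<and> U \<noteq> {} \<and> openin (top_of_set X) V \<and> V \<noteq> {}"
  then obtain k where k: "k \<ge> 1" "\<forall>i<r. \<exists>w\<in>U. (f ^^ (k * a i)) w \<in> V"
    using a_transitiveD[OF assms(1), where U = "\<lambda>_. U" and V = "\<lambda>_. V"] by blast
  then obtain w where "w \<in> U" "(f ^^ (k * a 0)) w \<in> V"
    using assms(2) by auto
  then show "\<exists>n\<ge>1. \<exists>x\<in>U. (f ^^ n) x \<in> V"
    using k(1) assms(3) by (intro exI[of _ "k * a 0"]) auto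
qed

lemma a_transitive_imp_return_times:
  fixes X :: "'a::metric_space set"
  assumes "compact X" "continuous_on X f" "f ` X \<subseteq> X" "a_transitive X f r a"
    and "r \<ge> 1" "\<forall>i<r. a i \<ge> 1" "openin (top_of_set X) W" "W \<noteq> {}"
  shows "return_times f W \<in> F_vec r a"
proof -
  have surj: "(f ^^ m) ` X = X" for m
    using top_transitive_funpow_surj[OF assms(1-3) a_transitive_imp_top_transitive[OF assms(4,5)]]
      assms(5,6) by simp
  have "\<exists>k\<ge>1. \<forall>i<r. k * a i + n i \<in> return_times f W" for n :: "nat \<Rightarrow> nat"
  proof -
    define V where "V i = {y \<in> X. (f ^^ n i) y \<in> W}" for i
    have V_open: "openin (top_of_set X) (V i)" for i
      unfolding V_def using openin_funpow_preimage[OF assms(2,3,7)] .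
    have V_nonempty: "V i \<noteq> {}" for i
    proof -
      obtain w where "w \<in> W"
        using assms(8) by blast
      then have "w \<in> (f ^^ n i) ` X"
        using surj openin_imp_subset[OF assms(7)] by blast
      then show ?thesis
        using \<open>w \<in> W\<close> unfolding V_def by blast
    qed
    obtain k where k: "k \<ge> 1" "\<forall>i<r. \<exists>w\<in>W. (f ^^ (k * a i)) w \<in> V i"
      using a_transitiveD[OF assms(4), where U = "\<lambda>_. W" and V = V] assms(7,8) V_open V_nonempty
      by blast
    have "k * a i + n i \<in> return_times f W" if i: "i < r" for i
    proof -
      obtain w where "w \<in> W" "(f ^^ n i) ((f ^^ (k * a i)) w) \<in> W"
        using k(2) i unfolding V_def by blast
      moreover have "k * a i + n i \<ge> 1"
        using k(1) assms(6) i by (simp add: Suc_le_eq)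
      ultimately show ?thesis
        unfolding return_times_def by (auto simp: funpow_add add.commute)
    qed
    then show ?thesis
      using k(1) by blast
  qed
  moreover have "return_times f W \<subseteq> {1..}"
    unfolding return_times_def by auto
  ultimately show ?thesis
    unfolding F_vec_def by blast
qed

lemma return_times_imp_a_transitive:
  assumes "continuous_on X f" "f ` X \<subseteq> X" "x \<in> X" "visits_open_sets_infinitely X f x"
    and "\<forall>W. openin (top_of_set X) W \<and> W \<noteq> {} \<longrightarrow> return_times f W \<in> F_vec r a"
  shows "a_transitive X f r a"
proof (rule a_transitiveI)
  fix U V
  assume U: "\<And>i. i < r \<Longrightarrow> openin (top_of_set X) (U i) \<and> U i \<noteq> {}"
    and V: "\<And>i. i < r \<Longrightarrow> openin (top_of_set X) (V i) \<and> V i \<noteq> {}"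
  have "\<forall>i. \<exists>t. i < r \<longrightarrow> t \<in> hit_times f x (V i)"
  proof
    fix i
    show "\<exists>t. i < r \<longrightarrow> t \<in> hit_times f x (V i)"
    proof (cases "i < r")
      case True
      then show ?thesis
        using visits_open_sets_infinitelyD[OF assms(4) V[OF True, THEN conjunct1] V[OF True, THEN conjunct2]]
        by blast
    qed simp
  qed
  then obtain t where t: "\<forall>i. i < r \<longrightarrow> t i \<in> hit_times f x (V i)"
    by (rule exE[OF choice])
  have "\<forall>i. \<exists>s. i < r \<longrightarrow> s \<ge> t i \<and> s \<in> hit_times f x (U i)"
  proof
    fix i
    show "\<exists>s. i < r \<longrightarrow> s \<ge> t i \<and> s \<in> hit_times f x (U i)"
    proof (cases "i < r")
      case True
      then show ?thesis
        using visits_open_sets_infinitelyD[OF assms(4) U[OF True, THEN conjunct1] U[OF True, THEN conjunct2]]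
        by blast
    qed simp
  qed
  then obtain s where s: "\<forall>i. i < r \<longrightarrow> s i \<ge> t i \<and> s i \<in> hit_times f x (U i)"
    by (rule exE[OF choice])
  define W where "W = (\<Inter>i\<in>{..<r}. {w \<in> X. (f ^^ s i) w \<in> U i} \<inter> {w \<in> X. (f ^^ t i) w \<in> V i}) \<inter> X"
  have "openin (top_of_set X) W"
    unfolding W_def using openin_funpow_preimage[OF assms(1,2)] U V
    by (intro openin_INT[where T = "top_of_set X", simplified] openin_Int) auto
  moreover have "x \<in> W"
    unfolding W_def using s t assms(3) by (auto simp: hit_times_def)
  ultimately obtain k where k: "k \<ge> 1" "\<forall>i<r. k * a i + (s i - t i) \<in> return_times f W"
    using F_vecD[where n = "\<lambda>i. s i - t i"] assms(5) by blast
  have "\<exists>w\<in>U i. (f ^^ (k * a i)) w \<in> V i" if i: "i < r" for i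
  proof -
    obtain w where w: "w \<in> W" "(f ^^ (k * a i + (s i - t i))) w \<in> W"
      using k(2) i unfolding return_times_def by blast
    have "t i \<le> s i"
      using s i by blast
    then have eq: "k * a i + s i = t i + (k * a i + (s i - t i))"
      by linarith
    have "(f ^^ (k * a i)) ((f ^^ s i) w) = (f ^^ (k * a i + s i)) w"
      by (simp add: funpow_add)
    also have "\<dots> = (f ^^ (t i + (k * a i + (s i - t i)))) w"
      by (simp only: eq)
    also have "\<dots> = (f ^^ t i) ((f ^^ (k * a i + (s i - t i))) w)"
      by (simp only: funpow_add comp_apply)
    finally have "(f ^^ (k * a i)) ((f ^^ s i) w) \<in> V i"
      using w(2) i unfolding W_def by auto
    moreover have "(f ^^ s i) w \<in> U i"
      using w(1) i unfolding W_def by auto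
    ultimately show ?thesis
      by blast
  qed
  then show "\<exists>k\<ge>1. \<forall>i<r. \<exists>w\<in>U i. (f ^^ (k * a i)) w \<in> V i"
    using k(1) by blast
qed

lemma a_transitive_iff_return_times:
  fixes X :: "'a::metric_space set"
  assumes "compact X" "X \<noteq> {}" "continuous_on X f" "f ` X \<subseteq> X"
    and "r \<ge> 1" "\<forall>i<r. a i \<ge> 1"
  shows "a_transitive X f r a \<longleftrightarrow>
    (\<forall>U. openin (top_of_set X) U \<and> U \<noteq> {} \<longrightarrow> return_times f U \<in> F_vec r a) \<and>
    (\<exists>x\<in>X. visits_open_sets_infinitely X f x)"
proof
  assume trans: "a_transitive X f r a"
  moreover have "a 0 \<ge> 1"
    using assms(5,6) by simp
  ultimately have "top_transitive (top_of_set X) f"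
    using a_transitive_imp_top_transitive assms(5) by blast
  then obtain x where "x \<in> X" "visits_open_sets_infinitely X f x"
    using top_transitive_imp_visiting_point[OF assms(1-4)] by blast
  then show "(\<forall>U. openin (top_of_set X) U \<and> U \<noteq> {} \<longrightarrow> return_times f U \<in> F_vec r a) \<and>
    (\<exists>x\<in>X. visits_open_sets_infinitely X f x)"
    using a_transitive_imp_return_times[OF assms(1,3,4) trans assms(5,6)] by blast
next
  assume "(\<forall>U. openin (top_of_set X) U \<and> U \<noteq> {} \<longrightarrow> return_times f U \<in> F_vec r a) \<and>
    (\<exists>x\<in>X. visits_open_sets_infinitely X f x)"
  then show "a_transitive X f r a"
    using return_times_imp_a_transitive[OF assms(3,4)] by blast
qed

theorem theorem4p7:
  fixes X :: "'a::metric_space set" and f :: "'a \<Rightarrow> 'a"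
    and r :: nat and a :: "nat \<Rightarrow> nat"
  assumes "compact X" and "X \<noteq> {}"
    and "continuous_on X f" and "f ` X \<subseteq> X"
    and "r \<ge> 1" and "\<forall>i<r. a i \<ge> 1"
  shows "(a_transitive X f r a \<longleftrightarrow> F_trans_points (nabla (F_vec r a)) X f \<noteq> {})
       \<and> (F_trans_points (nabla (F_vec r a)) X f \<noteq> {} \<longleftrightarrow>
          (trans_points X f = F_trans_points (nabla (F_vec r a)) X f
           \<and> F_trans_points (nabla (F_vec r a)) X f \<noteq> {}))"
proof -
  define returns where
    "returns \<longleftrightarrow> (\<forall>U. openin (top_of_set X) U \<and> U \<noteq> {} \<longrightarrow> return_times f U \<in> F_vec r a)"
  have "F_trans_points (nabla (F_vec r a)) X f = {x \<in> X. visits_open_sets_infinitely X f x \<and> returns}"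
    using F_trans_points_nabla_F_vec[OF assms(3-5)] unfolding returns_def by blast
  moreover have "trans_points X f = {x \<in> X. visits_open_sets_infinitely X f x}"
    using trans_points_eq_visits_open_sets_infinitely[OF compact_imp_closed assms(4)] assms(1) by blast
  moreover have "a_transitive X f r a \<longleftrightarrow> returns \<and> (\<exists>x\<in>X. visits_open_sets_infinitely X f x)"
    using a_transitive_iff_return_times[OF assms] unfolding returns_def .
  ultimately show ?thesis
    by auto
qed

end
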